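(* Let $\mathcal{H}$ be a complex Hilbert space, $A\in\mathcal{B}(\mathcal{H})$ positive and $S\in\mathcal{B}_A(\mathcal{H})$. Then $$d\omega_A^2(S)\le\left\|SS^{\sharp_A}+\left(S^{\sharp_A}S\right)^2\right\|_A^{1/2}\left\|S^{\sharp_A}S+\left(S^{\sharp_A}S\right)^2\right\|_A^{1/2}.$$
   Context: $\mathcal{B}(\mathcal{H})$ denotes the bounded linear operators on $\mathcal{H}$. For positive $A$, $\langle x,z\rangle_A=\langle Ax,z\rangle$ and $\|z\|_A=\|A^{1/2}z\|$. $\mathcal{B}_A(\mathcal{H})$ is the set of $S\in\mathcal{B}(\mathcal{H})$ for which some $R\in\mathcal{B}(\mathcal{H})$ satisfies $AR=S^*A$; for such $S$, $S^{\sharp_A}=A^{\dagger}S^*A$ with $A^\dagger$ the Moore–Penrose inverse of $A$. For operators $T$ bounded with respect to $\|\cdot\|_A$: $\|T\|_A=\sup_{\|z\|_A=1}\|Tz\|_A$ and $d\omega_A(T)=\sup_{\|z\|_A=1}(|\langle Tz,z\rangle_A|^2+\|Tz\|_A^4)^{1/2}$. *)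

theory Defs
  imports Complex_Main
begin

text \<open>A complex Hilbert space is modelled as a type 'h with its additive group
structure, an explicit complex scalar multiplication smul and an explicit inner
product ip (linear in the first argument, conjugate-linear in the second).\<close>

definition hnorm :: "('h \<Rightarrow> 'h \<Rightarrow> complex) \<Rightarrow> 'h \<Rightarrow> real" where
  "hnorm ip x = sqrt (Re (ip x x))"

definition complex_hilbert ::
  "(complex \<Rightarrow> 'h::ab_group_add \<Rightarrow> 'h) \<Rightarrow> ('h \<Rightarrow> 'h \<Rightarrow> complex) \<Rightarrow> bool" where
  "complex_hilbert smul ip \<longleftrightarrow>
     (\<forall>a x y. smul a (x + y) = smul a x + smul a y) \<and>
     (\<forall>a b x. smul (a + b) x = smul a x + smul b x) \<and>
     (\<forall>a b x. smul (a * b) x = smul a (smul b x)) \<and>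
     (\<forall>x. smul 1 x = x) \<and>
     (\<forall>x y z. ip (x + y) z = ip x z + ip y z) \<and>
     (\<forall>a x y. ip (smul a x) y = a * ip x y) \<and>
     (\<forall>x y. ip y x = cnj (ip x y)) \<and>
     (\<forall>x. 0 \<le> Re (ip x x)) \<and>
     (\<forall>x. ip x x = 0 \<longrightarrow> x = 0) \<and>
     (\<forall>X. (\<forall>e>0. \<exists>N. \<forall>m\<ge>N. \<forall>n\<ge>N. hnorm ip (X m - X n) < e) \<longrightarrow>
          (\<exists>L. (\<lambda>n. hnorm ip (X n - L)) \<longlonglongrightarrow> 0))"

definition bounded_op ::
  "(complex \<Rightarrow> 'h::ab_group_add \<Rightarrow> 'h) \<Rightarrow> ('h \<Rightarrow> 'h \<Rightarrow> complex) \<Rightarrow> ('h \<Rightarrow> 'h) \<Rightarrow> bool" where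
  "bounded_op smul ip T \<longleftrightarrow>
     (\<forall>x y. T (x + y) = T x + T y) \<and> (\<forall>a x. T (smul a x) = smul a (T x)) \<and>
     (\<exists>C. \<forall>x. hnorm ip (T x) \<le> C * hnorm ip x)"

definition positive_op :: "('h \<Rightarrow> 'h \<Rightarrow> complex) \<Rightarrow> ('h \<Rightarrow> 'h) \<Rightarrow> bool" where
  "positive_op ip A \<longleftrightarrow> (\<forall>x. Im (ip (A x) x) = 0 \<and> 0 \<le> Re (ip (A x) x))"

definition adj :: "('h \<Rightarrow> 'h \<Rightarrow> complex) \<Rightarrow> ('h \<Rightarrow> 'h) \<Rightarrow> ('h \<Rightarrow> 'h)" where
  "adj ip S = (THE T. \<forall>x y. ip (S x) y = ip x (T y))"

definition B_A ::
  "(complex \<Rightarrow> 'h::ab_group_add \<Rightarrow> 'h) \<Rightarrow> ('h \<Rightarrow> 'h \<Rightarrow> complex) \<Rightarrow> ('h \<Rightarrow> 'h) \<Rightarrow> ('h \<Rightarrow> 'h) set" where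
  "B_A smul ip A = {S. bounded_op smul ip S \<and>
      (\<exists>R. bounded_op smul ip R \<and> A \<circ> R = adj ip S \<circ> A)}"

text \<open>Closure of the range of A (w.r.t. the Hilbert norm), orthogonal projection onto it,
and the Moore-Penrose inverse: for y in R(A) + R(A)^perp, A^dagger y is the unique
x in N(A)^perp with A x = P_{closure R(A)} y.\<close>
definition range_closure :: "('h::ab_group_add \<Rightarrow> 'h \<Rightarrow> complex) \<Rightarrow> ('h \<Rightarrow> 'h) \<Rightarrow> 'h set" where
  "range_closure ip A = {m. \<forall>e>0. \<exists>x. hnorm ip (m - A x) < e}"

definition proj_range :: "('h::ab_group_add \<Rightarrow> 'h \<Rightarrow> complex) \<Rightarrow> ('h \<Rightarrow> 'h) \<Rightarrow> 'h \<Rightarrow> 'h" where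
  "proj_range ip A y = (THE p. p \<in> range_closure ip A \<and> (\<forall>m\<in>range_closure ip A. ip (y - p) m = 0))"

definition moore_penrose :: "('h::ab_group_add \<Rightarrow> 'h \<Rightarrow> complex) \<Rightarrow> ('h \<Rightarrow> 'h) \<Rightarrow> 'h \<Rightarrow> 'h" where
  "moore_penrose ip A y = (THE x. (\<forall>k. A k = 0 \<longrightarrow> ip x k = 0) \<and> A x = proj_range ip A y)"

definition sharpA :: "('h::ab_group_add \<Rightarrow> 'h \<Rightarrow> complex) \<Rightarrow> ('h \<Rightarrow> 'h) \<Rightarrow> ('h \<Rightarrow> 'h) \<Rightarrow> ('h \<Rightarrow> 'h)" where
  "sharpA ip A S = moore_penrose ip A \<circ> adj ip S \<circ> A"

text \<open>A-seminorm \<parallel>z\<parallel>_A = \<parallel>A^{1/2} z\<parallel> = sqrt \<langle>Az,z\<rangle>.\<close>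
definition normA :: "('h \<Rightarrow> 'h \<Rightarrow> complex) \<Rightarrow> ('h \<Rightarrow> 'h) \<Rightarrow> 'h \<Rightarrow> real" where
  "normA ip A z = sqrt (Re (ip (A z) z))"

text \<open>Suprema over the A-unit sphere; 0 is inserted so that the (degenerate) empty
sphere (A = 0) gives 0; otherwise this does not change the supremum of nonnegative values.\<close>
definition opnormA :: "('h \<Rightarrow> 'h \<Rightarrow> complex) \<Rightarrow> ('h \<Rightarrow> 'h) \<Rightarrow> ('h \<Rightarrow> 'h) \<Rightarrow> real" where
  "opnormA ip A T = Sup (insert 0 {normA ip A (T z) | z. normA ip A z = 1})"

definition domegaA :: "('h \<Rightarrow> 'h \<Rightarrow> complex) \<Rightarrow> ('h \<Rightarrow> 'h) \<Rightarrow> ('h \<Rightarrow> 'h) \<Rightarrow> real" where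
  "domegaA ip A T = Sup (insert 0 {sqrt ((cmod (ip (A (T z)) z))\<^sup>2 + (normA ip A (T z)) ^ 4) | z. normA ip A z = 1})"

end

theory Submission
  imports Defs
begin

text \<open>
  Since S is in B_A(H) there is a bounded R with A R = S* A, i.e. <A S x, y> = <A x, R y>.
  Then S and R map ker A into itself and A S^#A = A R, so in every A-seminorm quantity S^#A may
  be replaced by R. For an A-unit vector z put p = |<A S z, z>|. Cauchy-Schwarz for the
  semi-inner product <A.,.> gives p <= |S z|_A, p <= |R z|_A and |S z|_A^2 = <A R S z, z> <= |R S z|_A,
  hence, by Cauchy-Schwarz in the plane,
    p^2 + |S z|_A^4 <= |S z|_A |R z|_A + |R S z|_A^2
                    <= (|R z|_A^2 + |R S z|_A^2)^(1/2) (|S z|_A^2 + |R S z|_A^2)^(1/2),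
  and the two brackets are <A T z, z> for T = S R + (R S)^2 and T = R S + (R S)^2, each at most
  the A-operator norm of T.

  These A-operator norms are suprema, so one also needs T to be A-bounded. Both operators are
  A-selfadjoint, and for an A-selfadjoint bounded U the sequence k \<mapsto> |U^k y|_A is log-convex;
  thus |U y|_A^k <= |U^k y|_A <= |A|^(1/2) |U|^k |y| for |y|_A = 1, which forces |U y|_A <= |U|.
  Adjoints and the identity A A^dagger A = A follow from the projection theorem and the Riesz
  representation theorem, which hold under the axioms of complex_hilbert.
\<close>

lemma discriminant_le_of_quadratic_nonneg:
  fixes a b k :: real
  assumes nonneg: "\<And>t. 0 \<le> a - 2 * t * k + t\<^sup>2 * k * b" and "0 \<le> k" "0 \<le> b"
  shows "k \<le> a * b"
proof (cases "b = 0")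
  case True
  show ?thesis
  proof (rule ccontr)
    assume "\<not> k \<le> a * b"
    with True have "0 < k" by simp
    then have "a - 2 * ((\<bar>a\<bar> + 1) / k) * k = a - 2 * (\<bar>a\<bar> + 1)" by simp
    then show False using nonneg[of "(\<bar>a\<bar> + 1) / k"] True by simp
  qed
next
  case False
  with \<open>0 \<le> b\<close> have "0 < b" by simp
  have "0 \<le> a - 2 * (1 / b) * k + (1 / b)\<^sup>2 * k * b" by (rule nonneg)
  also have "\<dots> = a - k / b" using \<open>0 < b\<close> by (simp add: power2_eq_square field_simps)
  finally show ?thesis using \<open>0 < b\<close> by (simp add: divide_le_eq mult.commute)
qed

lemma log_convex_power_le:
  fixes a :: "nat \<Rightarrow> real"
  assumes "a 0 = 1" and nonneg: "\<And>k. 0 \<le> a k"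
    and log_convex: "\<And>k. (a (Suc k))\<^sup>2 \<le> a k * a (Suc (Suc k))"
  shows "a 1 ^ k \<le> a k"
proof (cases "a 1 = 0")
  case True
  then show ?thesis using \<open>a 0 = 1\<close> nonneg by (cases k) auto
next
  case False
  with nonneg have "0 < a 1" by (simp add: order_less_le)
  have "a 1 * a k \<le> a (Suc k) \<and> a 1 ^ k \<le> a k" for k
  proof (induction k)
    case 0
    then show ?case using \<open>a 0 = 1\<close> by simp
  next
    case (Suc k)
    then have "0 < a k" using \<open>0 < a 1\<close> by (meson less_le_trans zero_less_power)
    have "a k * (a 1 * a (Suc k)) = a (Suc k) * (a 1 * a k)" by simp
    also have "\<dots> \<le> a (Suc k) * a (Suc k)" using Suc nonneg by (simp add: mult_left_mono)
    also have "\<dots> \<le> a k * a (Suc (Suc k))" using log_convex[of k] by (simp add: power2_eq_square)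
    finally have "a 1 * a (Suc k) \<le> a (Suc (Suc k))" using \<open>0 < a k\<close> by simp
    moreover have "a 1 ^ Suc k \<le> a 1 * a k" using Suc \<open>0 < a 1\<close> by simp
    ultimately show ?case using Suc by simp
  qed
  then show ?thesis by blast
qed

lemma le_of_power_le_const_mult_power:
  fixes x y c :: real
  assumes "0 < y" and bound: "\<And>k. x ^ k \<le> c * y ^ k"
  shows "x \<le> y"
proof (rule ccontr)
  assume "\<not> x \<le> y"
  then have "1 < x / y" using \<open>0 < y\<close> by simp
  then obtain k where "c < (x / y) ^ k" using real_arch_pow by blast
  moreover have "0 < y ^ k" using \<open>0 < y\<close> by simp
  ultimately show False using bound[of k] by (simp add: power_divide pos_less_divide_eq)
qed

lemma sq_add_pow4_le_sqrt_mult: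
  fixes p s r t :: real
  assumes "0 \<le> p" "p \<le> s" "p \<le> r" "s\<^sup>2 \<le> t"
  shows "p\<^sup>2 + s ^ 4 \<le> sqrt (r\<^sup>2 + t\<^sup>2) * sqrt (s\<^sup>2 + t\<^sup>2)"
proof -
  have "p\<^sup>2 \<le> s * r" using assms by (simp add: power2_eq_square mult_mono)
  moreover have "s ^ 4 \<le> t\<^sup>2"
    using power_mono[OF \<open>s\<^sup>2 \<le> t\<close>, of 2] by simp
  moreover have "(s * r + t\<^sup>2)\<^sup>2 \<le> (r\<^sup>2 + t\<^sup>2) * (s\<^sup>2 + t\<^sup>2)"
    using zero_le_power2[of "r * t - s * t"] by (simp add: power2_eq_square algebra_simps)
  then have "s * r + t\<^sup>2 \<le> sqrt ((r\<^sup>2 + t\<^sup>2) * (s\<^sup>2 + t\<^sup>2))" by (rule real_le_rsqrt)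
  ultimately show ?thesis by (simp add: real_sqrt_mult)
qed

section \<open>Complex Hilbert spaces and positive operators\<close>

locale hilbert_space =
  fixes smul :: "complex \<Rightarrow> 'h::ab_group_add \<Rightarrow> 'h" and ip :: "'h \<Rightarrow> 'h \<Rightarrow> complex"
  assumes hilbert: "complex_hilbert smul ip"
begin

lemma smul_add_right: "smul a (x + y) = smul a x + smul a y"
  using hilbert unfolding complex_hilbert_def by (elim conjE) blast

lemma smul_add_left: "smul (a + b) x = smul a x + smul b x"
  using hilbert unfolding complex_hilbert_def by (elim conjE) blast

lemma smul_assoc: "smul (a * b) x = smul a (smul b x)"
  using hilbert unfolding complex_hilbert_def by (elim conjE) blast

lemma smul_one [simp]: "smul 1 x = x"
  using hilbert unfolding complex_hilbert_def by (elim conjE) blast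

lemma ip_add_left: "ip (x + y) z = ip x z + ip y z"
  using hilbert unfolding complex_hilbert_def by (elim conjE) blast

lemma ip_smul_left: "ip (smul a x) y = a * ip x y"
  using hilbert unfolding complex_hilbert_def by (elim conjE) blast

lemma ip_cnj: "ip y x = cnj (ip x y)"
  using hilbert unfolding complex_hilbert_def by (elim conjE) blast

lemma Re_ip_self_nonneg: "0 \<le> Re (ip x x)"
  using hilbert unfolding complex_hilbert_def by (elim conjE) blast

lemma ip_self_eq_0D: "ip x x = 0 \<Longrightarrow> x = 0"
  using hilbert unfolding complex_hilbert_def by (elim conjE) blast

lemma hnorm_Cauchy_convergent:
  "\<forall>e>0. \<exists>N. \<forall>m\<ge>N. \<forall>n\<ge>N. hnorm ip (X m - X n) < e \<Longrightarrow>
     \<exists>L. (\<lambda>n. hnorm ip (X n - L)) \<longlonglongrightarrow> 0"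
  using hilbert unfolding complex_hilbert_def by (elim conjE) (drule spec[of _ X], blast)

lemma ip_add_right: "ip x (y + z) = ip x y + ip x z"
  using ip_cnj[of x "y + z"] ip_cnj[of x y] ip_cnj[of x z] by (simp add: ip_add_left)

lemma ip_smul_right: "ip x (smul a y) = cnj a * ip x y"
  using ip_cnj[of x "smul a y"] ip_cnj[of x y] by (simp add: ip_smul_left)

lemma ip_zero_left [simp]: "ip 0 y = 0"
  using ip_add_left[of 0 0 y] by simp

lemma ip_zero_right [simp]: "ip y 0 = 0"
  using ip_add_right[of y 0 0] by simp

lemma ip_diff_left: "ip (x - y) z = ip x z - ip y z"
  using ip_add_left[of "x - y" y z] by (simp add: algebra_simps)

lemma ip_diff_right: "ip z (x - y) = ip z x - ip z y"
  using ip_add_right[of z "x - y" y] by (simp add: algebra_simps)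

lemma ip_eq_iff: "(\<forall>z. ip z x = ip z y) \<Longrightarrow> x = y"
  by (metis eq_iff_diff_eq_0 ip_diff_right ip_self_eq_0D right_minus_eq)

lemma Im_ip_self: "Im (ip x x) = 0"
  using arg_cong[OF ip_cnj[of x x], of Im] by simp

lemma smul_zero_right [simp]: "smul a 0 = 0"
  using smul_add_right[of a 0 0] by simp

lemma smul_zero_left [simp]: "smul 0 x = 0"
  using smul_add_left[of 0 0 x] by simp

lemma smul_diff_right: "smul a (x - y) = smul a x - smul a y"
  using smul_add_right[of a "x - y" y] by (simp add: algebra_simps)

definition linear_op :: "('h \<Rightarrow> 'h) \<Rightarrow> bool" where
  "linear_op T \<longleftrightarrow> (\<forall>x y. T (x + y) = T x + T y) \<and> (\<forall>a x. T (smul a x) = smul a (T x))"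

definition positive_linear :: "('h \<Rightarrow> 'h) \<Rightarrow> bool" where
  "positive_linear A \<longleftrightarrow> linear_op A \<and> positive_op ip A"

lemma linear_op_add: "linear_op T \<Longrightarrow> T (x + y) = T x + T y"
  by (simp add: linear_op_def)

lemma linear_op_smul: "linear_op T \<Longrightarrow> T (smul a x) = smul a (T x)"
  by (simp add: linear_op_def)

lemma linear_op_diff: "linear_op T \<Longrightarrow> T (x - y) = T x - T y"
  using linear_op_add[of T "x - y" y] by (simp add: algebra_simps)

lemma linear_op_zero: "linear_op T \<Longrightarrow> T 0 = 0"
  using linear_op_diff[of T 0 0] by simp

lemma linear_op_plus: "linear_op S \<Longrightarrow> linear_op T \<Longrightarrow> linear_op (\<lambda>x. S x + T x)"
  by (simp add: linear_op_def smul_add_right algebra_simps)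

lemma positive_linear_id: "positive_linear (\<lambda>x. x)"
  by (simp add: positive_linear_def linear_op_def positive_op_def Im_ip_self Re_ip_self_nonneg)

context
  fixes A assumes A: "positive_linear A"
begin

lemma positive_linear_linear: "linear_op A"
  using A by (simp add: positive_linear_def)

lemma Re_ip_A_nonneg: "0 \<le> Re (ip (A x) x)"
  using A by (simp add: positive_linear_def positive_op_def)

lemma Im_ip_A: "Im (ip (A x) x) = 0"
  using A by (simp add: positive_linear_def positive_op_def)

lemma positive_linear_hermitian: "ip (A x) y = ip x (A y)"
proof -
  note L = positive_linear_linear
  let ?p = "ip (A x) y" and ?q = "ip (A y) x"
  have "Im (ip (A (x + y)) (x + y)) = 0" by (rule Im_ip_A)
  then have "Im (?p + ?q) = 0"
    using Im_ip_A[of x] Im_ip_A[of y]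
    by (simp add: linear_op_add[OF L] ip_add_left ip_add_right)
  moreover have "Im (ip (A (smul \<i> x + y)) (smul \<i> x + y)) = 0" by (rule Im_ip_A)
  then have "Im (\<i> * ?p - \<i> * ?q) = 0"
    using Im_ip_A[of x] Im_ip_A[of y]
    by (simp add: linear_op_add[OF L] linear_op_smul[OF L] ip_add_left ip_add_right
        ip_smul_left ip_smul_right)
  ultimately have "?p = cnj ?q" by (simp add: complex_eq_iff)
  then show ?thesis by (metis ip_cnj)
qed

lemma ip_A_swap: "ip (A y) x = cnj (ip (A x) y)"
  by (metis ip_cnj positive_linear_hermitian)

lemma Re_ip_A_diff_smul:
  fixes t :: real and x y :: 'h
  defines "c \<equiv> ip (A x) y"
  shows "Re (ip (A (x - smul (of_real t * c) y)) (x - smul (of_real t * c) y))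
     = Re (ip (A x) x) - 2 * t * (cmod c)\<^sup>2 + t\<^sup>2 * (cmod c)\<^sup>2 * Re (ip (A y) y)"
proof -
  note L = positive_linear_linear
  define l where "l = complex_of_real t * c"
  have expand: "ip (A (x - smul l y)) (x - smul l y)
      = ip (A x) x - cnj l * c - l * cnj c + l * cnj l * ip (A y) y"
    using ip_A_swap[of x y]
    by (simp add: linear_op_diff[OF L] linear_op_smul[OF L] ip_diff_left ip_diff_right
        ip_smul_left ip_smul_right c_def algebra_simps)
  have "c * cnj c = complex_of_real ((cmod c)\<^sup>2)"
    by (metis complex_norm_square of_real_power)
  then have "cnj l * c = complex_of_real (t * (cmod c)\<^sup>2)"
    and "l * cnj c = complex_of_real (t * (cmod c)\<^sup>2)"
    and "l * cnj l = complex_of_real (t\<^sup>2 * (cmod c)\<^sup>2)"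
    unfolding l_def by (simp_all add: power2_eq_square algebra_simps)
  then show ?thesis unfolding l_def[symmetric] expand by simp
qed

lemma cauchy_schwarz_A: "(cmod (ip (A x) y))\<^sup>2 \<le> Re (ip (A x) x) * Re (ip (A y) y)"
proof (rule discriminant_le_of_quadratic_nonneg)
  fix t
  show "0 \<le> Re (ip (A x) x) - 2 * t * (cmod (ip (A x) y))\<^sup>2
      + t\<^sup>2 * (cmod (ip (A x) y))\<^sup>2 * Re (ip (A y) y)"
    using Re_ip_A_diff_smul[where t=t and x=x and y=y]
      Re_ip_A_nonneg[of "x - smul (of_real t * ip (A x) y) y"] by simp
qed (simp_all add: Re_ip_A_nonneg)

lemma normA_sq: "(normA ip A x)\<^sup>2 = Re (ip (A x) x)"
  using Re_ip_A_nonneg[of x] by (simp add: normA_def)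

lemma normA_nonneg: "0 \<le> normA ip A x"
  by (simp add: normA_def Re_ip_A_nonneg)

lemma cauchy_schwarz_normA: "cmod (ip (A x) y) \<le> normA ip A x * normA ip A y"
proof (rule power2_le_imp_le)
  show "(cmod (ip (A x) y))\<^sup>2 \<le> (normA ip A x * normA ip A y)\<^sup>2"
    using cauchy_schwarz_A[of x y] by (simp add: power_mult_distrib normA_sq)
qed (simp add: normA_nonneg)

lemma A_eq_0_of_normA_eq_0: "normA ip A v = 0 \<Longrightarrow> A v = 0"
  using cauchy_schwarz_normA[of v "A v"] ip_self_eq_0D[of "A v"] by simp

lemma normA_triangle: "normA ip A (x + y) \<le> normA ip A x + normA ip A y"
proof (rule power2_le_imp_le)
  note L = positive_linear_linear
  have "Re (ip (A y) x) = Re (ip (A x) y)"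
    using ip_A_swap[of x y] by simp
  then have "Re (ip (A (x + y)) (x + y))
      = Re (ip (A x) x) + Re (ip (A y) y) + 2 * Re (ip (A x) y)"
    by (simp add: linear_op_add[OF L] ip_add_left ip_add_right algebra_simps)
  also have "\<dots> \<le> Re (ip (A x) x) + Re (ip (A y) y) + 2 * (normA ip A x * normA ip A y)"
    using cauchy_schwarz_normA[of x y] complex_Re_le_cmod[of "ip (A x) y"] by simp
  also have "\<dots> = (normA ip A x + normA ip A y)\<^sup>2"
    by (simp add: normA_sq[symmetric] power2_eq_square algebra_simps)
  finally show "(normA ip A (x + y))\<^sup>2 \<le> (normA ip A x + normA ip A y)\<^sup>2"
    by (simp add: normA_sq)
qed (simp add: normA_nonneg)

lemma normA_smul: "normA ip A (smul c x) = cmod c * normA ip A x"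
proof -
  have "ip (A (smul c x)) (smul c x) = (c * cnj c) * ip (A x) x"
    by (simp add: linear_op_smul[OF positive_linear_linear] ip_smul_left ip_smul_right)
  also have "c * cnj c = complex_of_real ((cmod c)\<^sup>2)"
    by (metis complex_norm_square of_real_power)
  finally have "Re (ip (A (smul c x)) (smul c x)) = (cmod c)\<^sup>2 * Re (ip (A x) x)"
    by simp
  then show ?thesis unfolding normA_def by (simp add: real_sqrt_mult)
qed

lemma normA_commute: "normA ip A (x - y) = normA ip A (y - x)"
proof -
  have "(x - y) + smul (-1) (x - y) = 0"
    using smul_add_left[of 1 "-1" "x - y"] by simp
  then have "smul (-1) (x - y) = y - x"
    by (simp add: add_eq_0_iff)
  then show ?thesis using normA_smul[of "-1" "x - y"] by simp
qed

end

lemma hnorm_eq_normA_id: "hnorm ip x = normA ip (\<lambda>x. x) x"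
  by (simp add: hnorm_def normA_def)

lemmas hnorm_sq = normA_sq[OF positive_linear_id, folded hnorm_eq_normA_id]
lemmas hnorm_nonneg = normA_nonneg[OF positive_linear_id, folded hnorm_eq_normA_id]
lemmas hnorm_triangle = normA_triangle[OF positive_linear_id, folded hnorm_eq_normA_id]
lemmas hnorm_commute = normA_commute[OF positive_linear_id, folded hnorm_eq_normA_id]
lemmas hnorm_smul = normA_smul[OF positive_linear_id, folded hnorm_eq_normA_id]
lemmas cauchy_schwarz_hnorm = cauchy_schwarz_normA[OF positive_linear_id, folded hnorm_eq_normA_id]

lemma hnorm_eq_0D: "hnorm ip x = 0 \<Longrightarrow> x = 0"
  using A_eq_0_of_normA_eq_0[OF positive_linear_id] by (simp add: hnorm_eq_normA_id)

lemmas hnorm_diff_smul_sq = Re_ip_A_diff_smul[OF positive_linear_id, folded hnorm_sq]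

section \<open>Projection theorem, Riesz representation, adjoints\<close>

lemma parallelogram_midpoint:
  "(hnorm ip (m - m'))\<^sup>2 = 2 * (hnorm ip (x - m))\<^sup>2 + 2 * (hnorm ip (x - m'))\<^sup>2
     - 4 * (hnorm ip (x - smul (1/2) (m + m')))\<^sup>2"
proof -
  define u where "u = x - m"
  define v where "v = x - m'"
  have "smul 2 (x - smul (1/2) (m + m')) = smul 2 x - (m + m')"
    using smul_assoc[of 2 "1/2" "m + m'"] by (simp add: smul_diff_right)
  also have "\<dots> = u + v"
    using smul_add_left[of 1 1 x] by (simp add: u_def v_def algebra_simps)
  finally have "hnorm ip (u + v) = 2 * hnorm ip (x - smul (1/2) (m + m'))"
    by (metis hnorm_smul norm_numeral)
  then have "(hnorm ip (u + v))\<^sup>2 = 4 * (hnorm ip (x - smul (1/2) (m + m')))\<^sup>2"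
    by (simp add: power_mult_distrib)
  moreover have "m - m' = v - u" by (simp add: u_def v_def)
  moreover have "ip (v - u) (v - u) + ip (u + v) (u + v) = 2 * ip u u + 2 * ip v v"
    by (simp add: ip_add_left ip_add_right ip_diff_left ip_diff_right algebra_simps)
  then have "(hnorm ip (v - u))\<^sup>2 + (hnorm ip (u + v))\<^sup>2 = 2 * (hnorm ip u)\<^sup>2 + 2 * (hnorm ip v)\<^sup>2"
    unfolding hnorm_sq by (simp add: complex_eq_iff)
  ultimately show ?thesis by (simp add: u_def v_def)
qed

definition closed_subspace :: "'h set \<Rightarrow> bool" where
  "closed_subspace M \<longleftrightarrow> 0 \<in> M \<and> (\<forall>x\<in>M. \<forall>y\<in>M. x + y \<in> M) \<and> (\<forall>a. \<forall>x\<in>M. smul a x \<in> M) \<and>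
     (\<forall>X L. (\<forall>n. X n \<in> M) \<longrightarrow> (\<lambda>n. hnorm ip (X n - L)) \<longlonglongrightarrow> 0 \<longrightarrow> L \<in> M)"

lemma closed_subspaceI:
  fixes \<phi> :: "'h \<Rightarrow> real"
  assumes "0 \<in> M" "\<And>x y. x \<in> M \<Longrightarrow> y \<in> M \<Longrightarrow> x + y \<in> M" "\<And>a x. x \<in> M \<Longrightarrow> smul a x \<in> M"
    and \<phi>_le: "\<And>x m. m \<in> M \<Longrightarrow> \<phi> x \<le> C * hnorm ip (x - m)"
    and \<phi>_nonpos: "\<And>x. \<phi> x \<le> 0 \<Longrightarrow> x \<in> M"
  shows "closed_subspace M"
  unfolding closed_subspace_def
proof (intro conjI ballI allI impI)
  fix X L assume "\<forall>n. X n \<in> M" and lim: "(\<lambda>n. hnorm ip (X n - L)) \<longlonglongrightarrow> 0"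
  then have "\<phi> L \<le> C * hnorm ip (X n - L)" for n
    using \<phi>_le[of "X n" L] hnorm_commute[of L "X n"] by simp
  moreover have "(\<lambda>n. C * hnorm ip (X n - L)) \<longlonglongrightarrow> 0"
    using tendsto_mult_right_zero[OF lim] .
  ultimately have "\<phi> L \<le> 0"
    by (intro tendsto_le[OF trivial_limit_sequentially _ tendsto_const]) auto
  then show "L \<in> M" by (rule \<phi>_nonpos)
qed (use assms in auto)

lemma minimizing_sequence_Cauchy:
  assumes mid: "\<And>m m'. m \<in> M \<Longrightarrow> m' \<in> M \<Longrightarrow> smul (1/2) (m + m') \<in> M"
    and low: "\<And>m. m \<in> M \<Longrightarrow> d \<le> (hnorm ip (x - m))\<^sup>2"
    and X: "\<And>n. X n \<in> M" "\<And>n. (hnorm ip (x - X n))\<^sup>2 < d + 1 / (real n + 1)"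
  shows "\<forall>e>0. \<exists>N. \<forall>j\<ge>N. \<forall>k\<ge>N. hnorm ip (X j - X k) < e"
proof (intro allI impI)
  fix e :: real assume "e > 0"
  obtain N :: nat where "4 / e\<^sup>2 < real N"
    using reals_Archimedean2 by blast
  then have N: "4 / (real N + 1) < e\<^sup>2"
    using \<open>e > 0\<close> by (simp add: field_simps) (use zero_less_power[of e 2] in linarith)
  have "hnorm ip (X j - X k) < e" if "N \<le> j" "N \<le> k" for j k
  proof -
    have "(hnorm ip (X j - X k))\<^sup>2
        \<le> 2 * (hnorm ip (x - X j))\<^sup>2 + 2 * (hnorm ip (x - X k))\<^sup>2 - 4 * d"
      using parallelogram_midpoint[of "X j" "X k" x] low[OF mid[OF X(1) X(1)]] by simp
    also have "\<dots> \<le> 2 / (real j + 1) + 2 / (real k + 1)"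
      using X(2)[of j] X(2)[of k] by simp
    also have "\<dots> \<le> 2 / (real N + 1) + 2 / (real N + 1)"
      using that by (intro add_mono divide_left_mono) auto
    finally have "(hnorm ip (X j - X k))\<^sup>2 < e\<^sup>2" using N by simp
    then show ?thesis using \<open>e > 0\<close> by (simp add: power2_less_imp_less)
  qed
  then show "\<exists>N. \<forall>j\<ge>N. \<forall>k\<ge>N. hnorm ip (X j - X k) < e" by blast
qed

lemma nearest_point_exists:
  assumes M: "closed_subspace M"
  shows "\<exists>p\<in>M. \<forall>m\<in>M. hnorm ip (x - p) \<le> hnorm ip (x - m)"
proof -
  have M0: "0 \<in> M" and mid: "\<And>m m'. m \<in> M \<Longrightarrow> m' \<in> M \<Longrightarrow> smul (1/2) (m + m') \<in> M"
    using M unfolding closed_subspace_def by blast+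
  define D where "D = (\<lambda>m. (hnorm ip (x - m))\<^sup>2) ` M"
  define d where "d = Inf D"
  have "D \<noteq> {}" "bdd_below D" using M0 by (auto simp: D_def intro!: bdd_belowI[of _ 0])
  then have low: "d \<le> (hnorm ip (x - m))\<^sup>2" if "m \<in> M" for m
    using that unfolding d_def D_def by (auto intro: cInf_lower)
  have "0 \<le> d" unfolding d_def using \<open>D \<noteq> {}\<close> by (auto simp: D_def intro: cInf_greatest)
  have "\<exists>m\<in>M. (hnorm ip (x - m))\<^sup>2 < d + 1 / (real n + 1)" for n
    using cInf_lessD[OF \<open>D \<noteq> {}\<close>, of "d + 1 / (real n + 1)"] by (auto simp: d_def D_def)
  then obtain X where X: "\<And>n. X n \<in> M" "\<And>n. (hnorm ip (x - X n))\<^sup>2 < d + 1 / (real n + 1)"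
    by metis
  obtain p where p: "(\<lambda>n. hnorm ip (X n - p)) \<longlonglongrightarrow> 0"
    using hnorm_Cauchy_convergent[OF minimizing_sequence_Cauchy[OF mid low X]] by blast
  have "p \<in> M" using M X(1) p unfolding closed_subspace_def by blast
  have "hnorm ip (x - p) \<le> sqrt (d + 1 / (real n + 1)) + hnorm ip (X n - p)" for n
    using hnorm_triangle[of "x - X n" "X n - p"] real_le_rsqrt[OF less_imp_le[OF X(2)[of n]]]
    by simp
  moreover have "(\<lambda>n. 1 / (real n + 1)) \<longlonglongrightarrow> 0"
    using LIMSEQ_inverse_real_of_nat by (simp add: inverse_eq_divide add.commute)
  then have "(\<lambda>n. sqrt (d + 1 / (real n + 1)) + hnorm ip (X n - p)) \<longlonglongrightarrow> sqrt (d + 0) + 0"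
    by (intro tendsto_intros p)
  ultimately have "hnorm ip (x - p) \<le> sqrt d"
    by (intro tendsto_le[OF trivial_limit_sequentially _ tendsto_const]) auto
  then have "(hnorm ip (x - p))\<^sup>2 \<le> d"
    using \<open>0 \<le> d\<close> hnorm_nonneg[of "x - p"] power_mono[of _ "sqrt d" 2] by simp
  then have "(hnorm ip (x - p))\<^sup>2 \<le> (hnorm ip (x - m))\<^sup>2" if "m \<in> M" for m
    using low[OF that] by simp
  then show ?thesis using \<open>p \<in> M\<close> hnorm_nonneg by (meson power2_le_imp_le)
qed

lemma nearest_point_orthogonal:
  assumes "\<And>m m'. m \<in> M \<Longrightarrow> m' \<in> M \<Longrightarrow> m + m' \<in> M" "\<And>a m. m \<in> M \<Longrightarrow> smul a m \<in> M"
    and "p \<in> M" and nearest: "\<forall>m\<in>M. hnorm ip (x - p) \<le> hnorm ip (x - m)" and "m \<in> M"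
  shows "ip (x - p) m = 0"
proof -
  define c where "c = ip (x - p) m"
  have "(cmod c)\<^sup>2 \<le> 0 * (hnorm ip m)\<^sup>2"
  proof (rule discriminant_le_of_quadratic_nonneg)
    fix t :: real
    have "p + smul (of_real t * c) m \<in> M" using assms by blast
    then have "(hnorm ip (x - p))\<^sup>2 \<le> (hnorm ip ((x - p) - smul (of_real t * c) m))\<^sup>2"
      using nearest hnorm_nonneg by (simp add: diff_diff_eq power_mono)
    then show "0 \<le> 0 - 2 * t * (cmod c)\<^sup>2 + t\<^sup>2 * (cmod c)\<^sup>2 * (hnorm ip m)\<^sup>2"
      using hnorm_diff_smul_sq[where t = t and x = "x - p" and y = m] by (simp add: c_def)
  qed simp_all
  then show ?thesis by (simp add: c_def)
qed

lemma orthogonal_projection_exists: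
  assumes "closed_subspace M"
  shows "\<exists>p\<in>M. \<forall>m\<in>M. ip (x - p) m = 0"
  using nearest_point_exists[OF assms, of x] nearest_point_orthogonal assms
  unfolding closed_subspace_def by metis

lemma riesz_representation:
  assumes f_add: "\<And>x y. f (x + y) = f x + f y" and f_smul: "\<And>a x. f (smul a x) = a * f x"
    and f_bound: "\<And>x. cmod (f x) \<le> C * hnorm ip x"
  shows "\<exists>z. \<forall>x. f x = ip x z"
proof (cases "\<forall>x. f x = 0")
  case True
  then show ?thesis by (intro exI[of _ 0]) simp
next
  case False
  then obtain u where "f u \<noteq> 0" by blast
  have f0: "f 0 = 0" using f_add[of 0 0] by simp
  have f_diff: "f (a - b) = f a - f b" for a b using f_add[of "a - b" b] by simp
  define M where "M = {x. f x = 0}"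
  have "closed_subspace M"
  proof (rule closed_subspaceI[where \<phi> = "\<lambda>x. cmod (f x)"])
    show "cmod (f x) \<le> C * hnorm ip (x - m)" if "m \<in> M" for x m
      using that f_bound[of "x - m"] by (simp add: M_def f_diff)
  qed (auto simp: M_def f_add f_smul f0)
  then obtain p where "p \<in> M" and orth: "\<forall>m\<in>M. ip (u - p) m = 0"
    using orthogonal_projection_exists by blast
  define q where "q = u - p"
  have "f q \<noteq> 0" using \<open>f u \<noteq> 0\<close> \<open>p \<in> M\<close> by (simp add: q_def M_def f_diff)
  define r where "r = ip q q"
  have "r \<noteq> 0" using \<open>f q \<noteq> 0\<close> ip_self_eq_0D[of q] f0 by (auto simp: r_def)
  have "f x = ip x (smul (cnj (f q / r)) q)" for x
  proof -
    have "f (x - smul (f x / f q) q) = 0" using \<open>f q \<noteq> 0\<close> by (simp add: f_diff f_smul)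
    then have "ip q (x - smul (f x / f q) q) = 0" using orth by (simp add: M_def q_def)
    then have "ip (x - smul (f x / f q) q) q = 0" using ip_cnj[of q] by simp
    then have "ip x q = f x / f q * r" by (simp add: ip_diff_left ip_smul_left r_def)
    then show ?thesis using \<open>f q \<noteq> 0\<close> \<open>r \<noteq> 0\<close> by (simp add: ip_smul_right)
  qed
  then show ?thesis by blast
qed

lemma bounded_op_linear: "bounded_op smul ip T \<Longrightarrow> linear_op T"
  by (simp add: bounded_op_def linear_op_def)

lemma bounded_op_bound:
  assumes "bounded_op smul ip T"
  obtains C where "0 \<le> C" "\<And>x. hnorm ip (T x) \<le> C * hnorm ip x"
proof -
  obtain C where C: "hnorm ip (T x) \<le> C * hnorm ip x" for x
    using assms by (auto simp: bounded_op_def)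
  have "hnorm ip (T x) \<le> max C 0 * hnorm ip x" for x
    using C[of x] hnorm_nonneg[of x] by (metis max.cobounded1 mult_right_mono order_trans)
  then show ?thesis using that[of "max C 0"] by simp
qed

lemma bounded_op_comp:
  assumes "bounded_op smul ip S" "bounded_op smul ip T"
  shows "bounded_op smul ip (\<lambda>x. S (T x))"
proof -
  obtain C D where "0 \<le> C" and SC: "\<And>x. hnorm ip (S x) \<le> C * hnorm ip x"
    and TD: "\<And>x. hnorm ip (T x) \<le> D * hnorm ip x"
    using bounded_op_bound assms by metis
  have "hnorm ip (S (T x)) \<le> (C * D) * hnorm ip x" for x
    using order_trans[OF SC mult_left_mono[OF TD \<open>0 \<le> C\<close>]] by (simp add: mult.assoc)
  then show ?thesis using assms by (auto simp: bounded_op_def)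
qed

lemma bounded_op_plus:
  assumes "bounded_op smul ip S" "bounded_op smul ip T"
  shows "bounded_op smul ip (\<lambda>x. S x + T x)"
proof -
  obtain C D where "\<And>x. hnorm ip (S x) \<le> C * hnorm ip x" "\<And>x. hnorm ip (T x) \<le> D * hnorm ip x"
    using bounded_op_bound assms by metis
  then have "hnorm ip (S x + T x) \<le> (C + D) * hnorm ip x" for x
    using hnorm_triangle[of "S x" "T x"] by (simp add: add_mono distrib_right order_trans)
  moreover have "linear_op (\<lambda>x. S x + T x)"
    using assms by (intro linear_op_plus bounded_op_linear)
  ultimately show ?thesis by (auto simp: bounded_op_def linear_op_def)
qed

lemma adj_ip:
  assumes S: "bounded_op smul ip S"
  shows "ip (S x) y = ip x (adj ip S y)"
proof -
  note L = bounded_op_linear[OF S]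
  obtain C where C: "0 \<le> C" "\<And>x. hnorm ip (S x) \<le> C * hnorm ip x"
    using bounded_op_bound[OF S] by blast
  have "\<exists>z. \<forall>x. ip (S x) y = ip x z" for y
  proof (rule riesz_representation)
    show "cmod (ip (S x) y) \<le> (C * hnorm ip y) * hnorm ip x" for x
    proof -
      have "cmod (ip (S x) y) \<le> hnorm ip (S x) * hnorm ip y" by (rule cauchy_schwarz_hnorm)
      also have "\<dots> \<le> (C * hnorm ip x) * hnorm ip y"
        using C(2) hnorm_nonneg by (rule mult_right_mono)
      finally show ?thesis by (simp add: algebra_simps)
    qed
  qed (simp_all add: linear_op_add[OF L] linear_op_smul[OF L] ip_add_left ip_smul_left)
  then obtain T where T: "\<forall>y x. ip (S x) y = ip x (T y)" by metis
  have "\<forall>x y. ip (S x) y = ip x (adj ip S y)"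
    unfolding adj_def
  proof (rule theI[of _ T])
    fix T' assume "\<forall>x y. ip (S x) y = ip x (T' y)"
    with T show "T' = T" by (intro ext ip_eq_iff) simp
  qed (use T in blast)
  then show ?thesis by blast
qed

lemma range_closure_image: "A w \<in> range_closure ip A"
  unfolding range_closure_def hnorm_def by (auto intro!: exI[of _ w])

lemma proj_range_image: "proj_range ip A (A w) = A w"
  unfolding proj_range_def
proof (rule the_equality)
  fix p assume p: "p \<in> range_closure ip A \<and> (\<forall>m\<in>range_closure ip A. ip (A w - p) m = 0)"
  then have "ip (A w - p) (A w - p) = 0"
    using range_closure_image by (simp add: ip_diff_right)
  then show "p = A w" using ip_self_eq_0D[of "A w - p"] by simp
qed (simp add: range_closure_image)

text \<open>A^dagger (A v) is v minus its orthogonal projection onto ker A.\<close>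

lemma moore_penrose_image:
  assumes A: "bounded_op smul ip A"
  shows "A (moore_penrose ip A (A v)) = A v"
proof -
  note L = bounded_op_linear[OF A]
  obtain C where C: "\<And>x. hnorm ip (A x) \<le> C * hnorm ip x"
    using bounded_op_bound[OF A] by blast
  define N where "N = {k. A k = 0}"
  have "closed_subspace N"
  proof (rule closed_subspaceI[where \<phi> = "\<lambda>x. hnorm ip (A x)"])
    show "hnorm ip (A x) \<le> C * hnorm ip (x - m)" if "m \<in> N" for x m
      using that C[of "x - m"] by (simp add: N_def linear_op_diff[OF L])
    show "x \<in> N" if "hnorm ip (A x) \<le> 0" for x
      using that hnorm_nonneg[of "A x"] hnorm_eq_0D by (simp add: N_def)
  qed (simp_all add: N_def linear_op_add[OF L] linear_op_smul[OF L] linear_op_zero[OF L])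
  then obtain p where "p \<in> N" and orth: "\<forall>k\<in>N. ip (v - p) k = 0"
    using orthogonal_projection_exists by blast
  let ?P = "\<lambda>x. (\<forall>k. A k = 0 \<longrightarrow> ip x k = 0) \<and> A x = proj_range ip A (A v)"
  have "?P (THE x. ?P x)"
  proof (rule theI[of _ "v - p"])
    show "?P (v - p)"
      using orth \<open>p \<in> N\<close> by (simp add: N_def proj_range_image linear_op_diff[OF L])
    fix x assume x: "?P x"
    then have "A (x - (v - p)) = 0"
      using \<open>p \<in> N\<close> by (simp add: N_def proj_range_image linear_op_diff[OF L])
    then have "ip (x - (v - p)) (x - (v - p)) = 0"
      using x orth by (simp add: N_def ip_diff_left)
    then show "x = v - p" using ip_self_eq_0D[of "x - (v - p)"] by simp
  qed
  then show ?thesis unfolding moore_penrose_def by (simp add: proj_range_image)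
qed

lemma hnorm_funpow_le:
  assumes "0 \<le> K" "\<And>x. hnorm ip (U x) \<le> K * hnorm ip x"
  shows "hnorm ip ((U ^^ k) v) \<le> K ^ k * hnorm ip v"
proof (induction k)
  case (Suc k)
  have "hnorm ip ((U ^^ Suc k) v) \<le> K * hnorm ip ((U ^^ k) v)" using assms(2) by simp
  also have "\<dots> \<le> K * (K ^ k * hnorm ip v)" using Suc \<open>0 \<le> K\<close> by (simp add: mult_left_mono)
  finally show ?case by (simp add: mult.assoc)
qed simp

end

section \<open>Operators on the semi-Hilbert space induced by A\<close>

lemma bdd_above_opnormA_set:
  assumes "\<And>z. normA ip A (T z) \<le> B * normA ip A z"
  shows "bdd_above (insert 0 {normA ip A (T z) | z. normA ip A z = 1})"
  using assms by (intro bdd_aboveI[of _ "max B 0"]) (auto simp: le_max_iff_disj, metis mult_1_right)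

lemma opnormA_nonneg:
  assumes "\<And>z. normA ip A (T z) \<le> B * normA ip A z"
  shows "0 \<le> opnormA ip A T"
  unfolding opnormA_def by (rule cSup_upper[OF _ bdd_above_opnormA_set[OF assms]]) simp

lemma normA_le_opnormA:
  assumes "\<And>z. normA ip A (T z) \<le> B * normA ip A z" and "normA ip A z = 1"
  shows "normA ip A (T z) \<le> opnormA ip A T"
  unfolding opnormA_def
  by (rule cSup_upper[OF _ bdd_above_opnormA_set[OF assms(1)]]) (use assms(2) in blast)

lemma domegaA_sq_le:
  assumes "0 \<le> M"
    and "\<And>z. normA ip A z = 1 \<Longrightarrow> (cmod (ip (A (T z)) z))\<^sup>2 + (normA ip A (T z)) ^ 4 \<le> M"
  shows "(domegaA ip A T)\<^sup>2 \<le> M"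
proof -
  have le: "domegaA ip A T \<le> sqrt M"
    unfolding domegaA_def by (rule cSup_least) (use assms in auto)
  have "0 \<le> domegaA ip A T"
    unfolding domegaA_def
    by (rule cSup_upper) (use assms in \<open>auto intro!: bdd_aboveI[of _ "sqrt M"]\<close>)
  with le have "(domegaA ip A T)\<^sup>2 \<le> (sqrt M)\<^sup>2" by (simp add: power_mono)
  then show ?thesis using \<open>0 \<le> M\<close> by simp
qed

locale semi_hilbert_space = hilbert_space smul ip
  for smul :: "complex \<Rightarrow> 'h::ab_group_add \<Rightarrow> 'h" and ip :: "'h \<Rightarrow> 'h \<Rightarrow> complex" +
  fixes A :: "'h \<Rightarrow> 'h"
  assumes A_bounded: "bounded_op smul ip A" and A_positive: "positive_op ip A"
begin

lemma A_positive_linear: "positive_linear A"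
  using A_bounded A_positive by (simp add: positive_linear_def bounded_op_linear)

lemmas A_linear = bounded_op_linear[OF A_bounded]
lemmas A_hermitian = positive_linear_hermitian[OF A_positive_linear]
lemmas A_ip_swap = ip_A_swap[OF A_positive_linear]
lemmas A_normA_sq = normA_sq[OF A_positive_linear]
lemmas A_normA_nonneg = normA_nonneg[OF A_positive_linear]
lemmas A_normA_smul = normA_smul[OF A_positive_linear]
lemmas A_cauchy_schwarz = cauchy_schwarz_normA[OF A_positive_linear]

lemma normA_cong:
  assumes "A u = A v"
  shows "normA ip A u = normA ip A v"
proof -
  have "ip (A u) u = ip u (A v)" using assms A_hermitian[of u u] by simp
  also have "\<dots> = ip (A v) v" using assms A_hermitian[of u v] A_hermitian[of v v] by simp
  finally show ?thesis by (simp add: normA_def)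
qed

lemma opnormA_cong:
  assumes "\<And>z. A (F z) = A (G z)"
  shows "opnormA ip A F = opnormA ip A G"
proof -
  have "normA ip A (F z) = normA ip A (G z)" for z using normA_cong assms by blast
  then show ?thesis by (simp add: opnormA_def)
qed

lemma Re_ip_le_opnormA:
  assumes "\<And>z. normA ip A (T z) \<le> B * normA ip A z" and "normA ip A z = 1"
  shows "Re (ip (A (T z)) z) \<le> opnormA ip A T"
proof -
  have "Re (ip (A (T z)) z) \<le> cmod (ip (A (T z)) z)" by (rule complex_Re_le_cmod)
  also have "\<dots> \<le> normA ip A (T z)" using A_cauchy_schwarz[of "T z" z] assms(2) by simp
  also have "\<dots> \<le> opnormA ip A T" by (rule normA_le_opnormA[OF assms])
  finally show ?thesis .
qed

definition A_adjoint_pair :: "('h \<Rightarrow> 'h) \<Rightarrow> ('h \<Rightarrow> 'h) \<Rightarrow> bool" where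
  "A_adjoint_pair S R \<longleftrightarrow> (\<forall>x y. ip (A (S x)) y = ip (A x) (R y))"

lemma A_adjoint_pairD: "A_adjoint_pair S R \<Longrightarrow> ip (A (S x)) y = ip (A x) (R y)"
  by (simp add: A_adjoint_pair_def)

lemma A_adjoint_pair_sym:
  assumes "A_adjoint_pair S R"
  shows "A_adjoint_pair R S"
  unfolding A_adjoint_pair_def
proof (intro allI)
  fix x y
  have "ip (A (R x)) y = cnj (ip (A y) (R x))" by (rule A_ip_swap)
  also have "\<dots> = ip (A x) (S y)" using A_adjoint_pairD[OF assms, of y x] A_ip_swap[of x "S y"] by simp
  finally show "ip (A (R x)) y = ip (A x) (S y)" .
qed

lemma A_adjoint_pair_congr:
  assumes "linear_op S" "A_adjoint_pair S R" and "A u = A v"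
  shows "A (S u) = A (S v)"
proof -
  have "A (u - v) = 0" using assms(3) by (simp add: linear_op_diff[OF A_linear])
  then have "normA ip A (S (u - v)) = 0"
    using A_adjoint_pairD[OF assms(2), of "u - v" "S (u - v)"] by (simp add: normA_def)
  then have "A (S (u - v)) = 0" by (rule A_eq_0_of_normA_eq_0[OF A_positive_linear])
  then show ?thesis by (simp add: linear_op_diff[OF A_linear] linear_op_diff[OF assms(1)])
qed

lemma B_A_A_adjoint_pair:
  assumes "S \<in> B_A smul ip A"
  obtains R where "bounded_op smul ip R" "A_adjoint_pair S R"
    "\<And>z. A (sharpA ip A S z) = A (R z)"
proof -
  obtain R where "bounded_op smul ip S" "bounded_op smul ip R" and AR: "A \<circ> R = adj ip S \<circ> A"
    using assms by (auto simp: B_A_def)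
  then have ARx: "A (R x) = adj ip S (A x)" for x by (metis comp_apply)
  have "A_adjoint_pair R S"
    unfolding A_adjoint_pair_def
  proof (intro allI)
    fix x y
    have "ip (A (R x)) y = cnj (ip y (adj ip S (A x)))" using ip_cnj[of y "A (R x)"] ARx by simp
    also have "\<dots> = ip (A x) (S y)"
      using adj_ip[OF \<open>bounded_op smul ip S\<close>, of y "A x"] ip_cnj[of "S y" "A x"]
      by (metis complex_cnj_cnj)
    finally show "ip (A (R x)) y = ip (A x) (S y)" .
  qed
  moreover have "A (sharpA ip A S z) = A (R z)" for z
    using moore_penrose_image[OF A_bounded, of "R z"] by (simp add: sharpA_def ARx)
  ultimately show ?thesis using that \<open>bounded_op smul ip R\<close> A_adjoint_pair_sym by blast
qed

lemma normA_sq_le_hnorm_sq: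
  obtains \<alpha> where "0 \<le> \<alpha>" "\<And>v. (normA ip A v)\<^sup>2 \<le> \<alpha> * (hnorm ip v)\<^sup>2"
proof -
  obtain \<alpha> where "0 \<le> \<alpha>" and A\<alpha>: "\<And>x. hnorm ip (A x) \<le> \<alpha> * hnorm ip x"
    using bounded_op_bound[OF A_bounded] by blast
  have "(normA ip A v)\<^sup>2 \<le> \<alpha> * (hnorm ip v)\<^sup>2" for v
  proof -
    have "(normA ip A v)\<^sup>2 \<le> cmod (ip (A v) v)" by (simp add: A_normA_sq complex_Re_le_cmod)
    also have "\<dots> \<le> hnorm ip (A v) * hnorm ip v" by (rule cauchy_schwarz_hnorm)
    also have "\<dots> \<le> (\<alpha> * hnorm ip v) * hnorm ip v" by (simp add: A\<alpha> hnorm_nonneg mult_right_mono)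
    finally show ?thesis by (simp add: power2_eq_square mult.assoc)
  qed
  then show ?thesis using that \<open>0 \<le> \<alpha>\<close> by blast
qed

lemma normA_sq_le_selfadjoint:
  assumes "A_adjoint_pair U U"
  shows "(normA ip A (U v))\<^sup>2 \<le> normA ip A v * normA ip A (U (U v))"
proof -
  have "(normA ip A (U v))\<^sup>2 = Re (ip (A v) (U (U v)))"
    by (simp add: A_normA_sq A_adjoint_pairD[OF assms])
  also have "\<dots> \<le> normA ip A v * normA ip A (U (U v))"
    using complex_Re_le_cmod A_cauchy_schwarz order_trans by blast
  finally show ?thesis .
qed

lemma normA_selfadjoint_unit_bound:
  assumes U: "A_adjoint_pair U U" and "0 < K" and hnorm_U: "\<And>x. hnorm ip (U x) \<le> K * hnorm ip x"
    and "normA ip A y = 1"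
  shows "normA ip A (U y) \<le> K"
proof -
  define a where "a k = normA ip A ((U ^^ k) y)" for k
  have a_power: "a 1 ^ k \<le> a k" for k
  proof (rule log_convex_power_le)
    show "(a (Suc k))\<^sup>2 \<le> a k * a (Suc (Suc k))" for k
      using normA_sq_le_selfadjoint[OF U, of "(U ^^ k) y"] by (simp add: a_def)
  qed (simp_all add: a_def \<open>normA ip A y = 1\<close> A_normA_nonneg)
  obtain \<alpha> where "0 \<le> \<alpha>" and \<alpha>: "\<And>v. (normA ip A v)\<^sup>2 \<le> \<alpha> * (hnorm ip v)\<^sup>2"
    using normA_sq_le_hnorm_sq by blast
  have "((a 1)\<^sup>2) ^ k \<le> (\<alpha> * (hnorm ip y)\<^sup>2) * (K\<^sup>2) ^ k" for k
  proof -
    have "((a 1)\<^sup>2) ^ k = (a 1 ^ k)\<^sup>2" by (simp only: power_even_eq[symmetric] power_mult)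
    also have "\<dots> \<le> (a k)\<^sup>2"
      using a_power[of k] A_normA_nonneg by (simp add: a_def power_mono)
    also have "\<dots> \<le> \<alpha> * (hnorm ip ((U ^^ k) y))\<^sup>2" unfolding a_def by (rule \<alpha>)
    also have "\<dots> \<le> \<alpha> * (K ^ k * hnorm ip y)\<^sup>2"
    proof -
      have "hnorm ip ((U ^^ k) y) \<le> K ^ k * hnorm ip y"
        using \<open>0 < K\<close> hnorm_U by (intro hnorm_funpow_le) simp_all
      then show ?thesis using \<open>0 \<le> \<alpha>\<close> hnorm_nonneg by (simp add: mult_left_mono power_mono)
    qed
    also have "\<dots> = (\<alpha> * (hnorm ip y)\<^sup>2) * (K ^ k)\<^sup>2" by (simp add: power_mult_distrib)
    also have "(K ^ k)\<^sup>2 = (K\<^sup>2) ^ k" by (simp only: power_even_eq[symmetric] power_mult)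
    finally show ?thesis .
  qed
  then have "(a 1)\<^sup>2 \<le> K\<^sup>2"
    using le_of_power_le_const_mult_power[where c = "\<alpha> * (hnorm ip y)\<^sup>2"] \<open>0 < K\<close> by simp
  then show ?thesis
    using power2_le_imp_le[of "a 1" K] \<open>0 < K\<close> by (simp add: a_def)
qed

lemma normA_selfadjoint_bounded:
  assumes "bounded_op smul ip U" "A_adjoint_pair U U"
  obtains C where "\<And>x. normA ip A (U x) \<le> C * normA ip A x"
proof -
  obtain K where "0 \<le> K" and K: "\<And>x. hnorm ip (U x) \<le> K * hnorm ip x"
    using bounded_op_bound[OF assms(1)] by blast
  have K1: "hnorm ip (U x) \<le> (K + 1) * hnorm ip x" for x
    using K[of x] hnorm_nonneg[of x] by (simp add: distrib_right)
  have "normA ip A (U x) \<le> (K + 1) * normA ip A x" for x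
  proof (cases "normA ip A x = 0")
    case True
    then show ?thesis using normA_sq_le_selfadjoint[OF assms(2), of x] by simp
  next
    case False
    define s where "s = normA ip A x"
    then have "0 < s" using False A_normA_nonneg[of x] by simp
    have inv_s: "cmod (of_real (1 / s)) = 1 / s" using \<open>0 < s\<close> by (simp only: norm_of_real) simp
    define y where "y = smul (of_real (1 / s)) x"
    have "normA ip A y = 1"
      using \<open>0 < s\<close> by (simp only: y_def A_normA_smul inv_s) (simp add: s_def)
    then have "normA ip A (U y) \<le> K + 1"
      using \<open>0 \<le> K\<close> by (intro normA_selfadjoint_unit_bound[OF assms(2) _ K1]) simp_all
    moreover have "normA ip A (U y) = cmod (of_real (1 / s)) * normA ip A (U x)"
      by (simp only: y_def linear_op_smul[OF bounded_op_linear[OF assms(1)]]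
          A_normA_smul)
    then have "normA ip A (U y) = normA ip A (U x) / s" by (simp only: inv_s) simp
    ultimately show ?thesis using \<open>0 < s\<close> by (simp add: s_def divide_le_eq mult.commute)
  qed
  then show ?thesis by (rule that)
qed

lemma Re_ip_A_adjoint_pair_terms:
  assumes "A_adjoint_pair S R"
  shows "Re (ip (A (S (R z) + R (S (R (S z))))) z)
      = (normA ip A (R z))\<^sup>2 + (normA ip A (R (S z)))\<^sup>2"
    and "Re (ip (A (R (S z) + R (S (R (S z))))) z)
      = (normA ip A (S z))\<^sup>2 + (normA ip A (R (S z)))\<^sup>2"
  using A_adjoint_pairD[OF assms] A_adjoint_pairD[OF A_adjoint_pair_sym[OF assms]]
  by (simp_all add: linear_op_add[OF A_linear] ip_add_left A_normA_sq)

lemma domegaA_term_le: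
  assumes SR: "A_adjoint_pair S R" and z: "normA ip A z = 1"
  shows "(cmod (ip (A (S z)) z))\<^sup>2 + (normA ip A (S z)) ^ 4
    \<le> sqrt (Re (ip (A (S (R z) + R (S (R (S z))))) z))
      * sqrt (Re (ip (A (R (S z) + R (S (R (S z))))) z))"
proof -
  note pair = A_adjoint_pairD[OF SR] A_adjoint_pairD[OF A_adjoint_pair_sym[OF SR]]
  have "cmod (ip (A (S z)) z) \<le> normA ip A (S z)"
    using A_cauchy_schwarz[of "S z" z] z by simp
  moreover have "cmod (ip (A (S z)) z) \<le> normA ip A (R z)"
    using A_cauchy_schwarz[of "R z" z] z A_ip_swap[of z "R z"] by (simp add: pair)
  moreover have "(normA ip A (S z))\<^sup>2 \<le> normA ip A (R (S z))"
  proof -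
    have "(normA ip A (S z))\<^sup>2 = Re (ip (A (R (S z))) z)" by (simp add: A_normA_sq pair)
    also have "\<dots> \<le> cmod (ip (A (R (S z))) z)" by (rule complex_Re_le_cmod)
    also have "\<dots> \<le> normA ip A (R (S z))" using A_cauchy_schwarz[of "R (S z)" z] z by simp
    finally show ?thesis .
  qed
  ultimately show ?thesis
    using sq_add_pow4_le_sqrt_mult[of "cmod (ip (A (S z)) z)" "normA ip A (S z)" "normA ip A (R z)"
        "normA ip A (R (S z))"] by (simp add: Re_ip_A_adjoint_pair_terms[OF SR])
qed

lemma domegaA_sq_le_A_adjoint_pair:
  assumes S: "bounded_op smul ip S" and R: "bounded_op smul ip R" and SR: "A_adjoint_pair S R"
  shows "(domegaA ip A S)\<^sup>2
    \<le> sqrt (opnormA ip A (\<lambda>z. S (R z) + R (S (R (S z)))))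
      * sqrt (opnormA ip A (\<lambda>z. R (S z) + R (S (R (S z)))))"
    (is "_ \<le> sqrt (opnormA ip A ?T1) * sqrt (opnormA ip A ?T2)")
proof -
  note pair = A_adjoint_pairD[OF SR] A_adjoint_pairD[OF A_adjoint_pair_sym[OF SR]]
  have "A_adjoint_pair ?T1 ?T1" "A_adjoint_pair ?T2 ?T2"
    unfolding A_adjoint_pair_def
    by (simp_all add: linear_op_add[OF A_linear] ip_add_left ip_add_right pair)
  moreover have "bounded_op smul ip ?T1" "bounded_op smul ip ?T2"
    using bounded_op_comp[OF S R] bounded_op_comp[OF R S]
      bounded_op_comp[OF bounded_op_comp[OF R S] bounded_op_comp[OF R S]]
    by (simp_all add: bounded_op_plus)
  ultimately obtain C1 C2 where C1: "\<And>z. normA ip A (?T1 z) \<le> C1 * normA ip A z"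
    and C2: "\<And>z. normA ip A (?T2 z) \<le> C2 * normA ip A z"
    using normA_selfadjoint_bounded by meson
  show ?thesis
  proof (rule domegaA_sq_le)
    fix z assume z: "normA ip A z = 1"
    have "(cmod (ip (A (S z)) z))\<^sup>2 + (normA ip A (S z)) ^ 4
        \<le> sqrt (Re (ip (A (?T1 z)) z)) * sqrt (Re (ip (A (?T2 z)) z))"
      by (rule domegaA_term_le[OF SR z])
    also have "\<dots> \<le> sqrt (opnormA ip A ?T1) * sqrt (opnormA ip A ?T2)"
      using Re_ip_le_opnormA[OF C1 z] Re_ip_le_opnormA[OF C2 z] opnormA_nonneg[OF C1]
      by (intro mult_mono) (simp_all add: Re_ip_A_adjoint_pair_terms[OF SR])
    finally show "(cmod (ip (A (S z)) z))\<^sup>2 + (normA ip A (S z)) ^ 4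
        \<le> sqrt (opnormA ip A ?T1) * sqrt (opnormA ip A ?T2)" .
  qed (simp add: opnormA_nonneg[OF C1] opnormA_nonneg[OF C2])
qed

end

theorem corollary2p26:
  fixes smul :: "complex \<Rightarrow> 'h::ab_group_add \<Rightarrow> 'h"
    and ip :: "'h \<Rightarrow> 'h \<Rightarrow> complex"
    and A S :: "'h \<Rightarrow> 'h"
  assumes "complex_hilbert smul ip"
    and "bounded_op smul ip A" and "positive_op ip A"
    and "S \<in> B_A smul ip A"
  shows "(domegaA ip A S)\<^sup>2 \<le>
     sqrt (opnormA ip A (\<lambda>z. S (sharpA ip A S z) + (sharpA ip A S \<circ> S) ((sharpA ip A S \<circ> S) z)))
   * sqrt (opnormA ip A (\<lambda>z. sharpA ip A S (S z) + (sharpA ip A S \<circ> S) ((sharpA ip A S \<circ> S) z)))"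
proof -
  interpret semi_hilbert_space smul ip A
    using assms by unfold_locales
  let ?sh = "sharpA ip A S"
  have S: "bounded_op smul ip S" using assms(4) by (simp add: B_A_def)
  obtain R where R: "bounded_op smul ip R" and SR: "A_adjoint_pair S R"
    and sharp: "\<And>z. A (?sh z) = A (R z)"
    using B_A_A_adjoint_pair[OF assms(4)] by blast
  note S_cong = A_adjoint_pair_congr[OF bounded_op_linear[OF S] SR]
  note R_cong = A_adjoint_pair_congr[OF bounded_op_linear[OF R] A_adjoint_pair_sym[OF SR]]
  have sharp_twice: "A (?sh (S (?sh (S z)))) = A (R (S (R (S z))))" for z
    using sharp[of "S (?sh (S z))"] R_cong[OF S_cong[OF sharp[of "S z"]]] by simp
  note A_cong = sharp S_cong[OF sharp] R_cong[OF S_cong[OF sharp]] sharp_twice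
  have "opnormA ip A (\<lambda>z. S (?sh z) + (?sh \<circ> S) ((?sh \<circ> S) z))
      = opnormA ip A (\<lambda>z. S (R z) + R (S (R (S z))))"
    "opnormA ip A (\<lambda>z. ?sh (S z) + (?sh \<circ> S) ((?sh \<circ> S) z))
      = opnormA ip A (\<lambda>z. R (S z) + R (S (R (S z))))"
    by (intro opnormA_cong; simp add: linear_op_add[OF A_linear] A_cong)+
  with domegaA_sq_le_A_adjoint_pair[OF S R SR] show ?thesis by simp
qed

end
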